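(* For every finite $\sigma$-structure $\mathscr{A}$, $\mathsf{tw}(\mathscr{A})=\kappa^{\mathbb{P}}(\mathscr{A})-1$.
   Context: Let $\mathbf{k}=\{1,\dots,k\}$, $k\ge1$. $\mathbb{P}_k\mathscr{A}$ has universe $(\mathbf{k}\times A)^+$ (non-empty finite sequences $[(p_1,a_1),\dots,(p_n,a_n)]$); $\varepsilon$ gives the $A$-component of the last move; for $n$-ary $R$, $R^{\mathbb{P}_k\mathscr{A}}(s_1,\dots,s_n)$ iff the $s_i$ are pairwise prefix-comparable, for each $i$ the pebble index of the last move of $s_i$ does not occur in the suffix of $s_i$ in any $s_j\sqsupseteq s_i$, and $R^{\mathscr{A}}(\varepsilon s_1,\dots,\varepsilon s_n)$. Comultiplication: $\delta[(p_1,a_1),\dots,(p_j,a_j)]=[(p_1,s_1),\dots,(p_j,s_j)]$ where $s_i=[(p_1,a_1),\dots,(p_i,a_i)]$; functor action: $\mathbb{P}_k h[(p_1,a_1),\dots,(p_j,a_j)]=[(p_1,h(a_1)),\dots,(p_j,h(a_j))]$. A $\mathbb{P}_k$-coalgebra on $\mathscr{A}$ is a homomorphism $\alpha:\mathscr{A}\to\mathbb{P}_k\mathscr{A}$ with $\delta\circ\alpha=\mathbb{P}_k\alpha\circ\alpha$ and $\varepsilon\circ\alpha=\mathrm{id}$; $\kappa^{\mathbb{P}}(\mathscr{A})$ is the least $k$ for which one exists. $\mathsf{tw}(\mathscr{A})$ is the tree-width of the Gaifman graph $\mathcal{G}(\mathscr{A})=(A,\frown)$ ($a\frown a'$ iff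 $a\ne a'$ occur in a common tuple of some relation), i.e. the minimum over tree decompositions $(T,\le,\lambda)$ of $\max_x|\lambda(x)|-1$, where a tree decomposition is a rooted tree $T$ with $\lambda:T\to\mathscr{P}(A)$ such that every vertex is in some bag, adjacent vertices share a bag, and the bags containing any given vertex form a connected set (contain every node on the tree path between two of them). *)

theory Defs
  imports Main "HOL-Library.Sublist"
begin

type_synonym ('a, 'r) struct = "'a set \<times> ('r \<Rightarrow> 'a list set)"

definition is_struct :: "('r \<Rightarrow> nat) \<Rightarrow> ('a, 'r) struct \<Rightarrow> bool" where
  "is_struct ar S \<longleftrightarrow> (\<forall>r. \<forall>t\<in>snd S r. length t = ar r \<and> set t \<subseteq> fst S)"

definition is_hom :: "('a, 'r) struct \<Rightarrow> ('b, 'r) struct \<Rightarrow> ('a \<Rightarrow> 'b) \<Rightarrow> bool" where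
  "is_hom S S' h \<longleftrightarrow> (\<forall>a\<in>fst S. h a \<in> fst S') \<and> (\<forall>r. \<forall>t\<in>snd S r. map h t \<in> snd S' r)"

definition Pk_univ :: "nat \<Rightarrow> 'a set \<Rightarrow> (nat \<times> 'a) list set" where
  "Pk_univ k A = {s. s \<noteq> [] \<and> set s \<subseteq> {1..k} \<times> A}"

definition eps :: "(nat \<times> 'a) list \<Rightarrow> 'a" where
  "eps s = snd (last s)"

definition Pk_rel :: "nat \<Rightarrow> ('a, 'r) struct \<Rightarrow> 'r \<Rightarrow> (nat \<times> 'a) list list set" where
  "Pk_rel k S r = {ss. set ss \<subseteq> Pk_univ k (fst S)
     \<and> (\<forall>i<length ss. \<forall>j<length ss. prefix (ss!i) (ss!j) \<or> prefix (ss!j) (ss!i))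
     \<and> (\<forall>i<length ss. \<forall>j<length ss. prefix (ss!i) (ss!j) \<longrightarrow>
           fst (last (ss!i)) \<notin> fst ` set (drop (length (ss!i)) (ss!j)))
     \<and> map eps ss \<in> snd S r}"

definition Pk :: "nat \<Rightarrow> ('a, 'r) struct \<Rightarrow> ((nat \<times> 'a) list, 'r) struct" where
  "Pk k S = (Pk_univ k (fst S), Pk_rel k S)"

definition Pk_map :: "('a \<Rightarrow> 'b) \<Rightarrow> (nat \<times> 'a) list \<Rightarrow> (nat \<times> 'b) list" where
  "Pk_map h s = map (\<lambda>(p, a). (p, h a)) s"

definition delta :: "(nat \<times> 'a) list \<Rightarrow> (nat \<times> (nat \<times> 'a) list) list" where
  "delta s = map (\<lambda>i. (fst (s!i), take (Suc i) s)) [0..<length s]"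

definition Pk_coalgebra :: "nat \<Rightarrow> ('a, 'r) struct \<Rightarrow> ('a \<Rightarrow> (nat \<times> 'a) list) \<Rightarrow> bool" where
  "Pk_coalgebra k S \<alpha> \<longleftrightarrow> is_hom S (Pk k S) \<alpha>
     \<and> (\<forall>a\<in>fst S. delta (\<alpha> a) = Pk_map \<alpha> (\<alpha> a))
     \<and> (\<forall>a\<in>fst S. eps (\<alpha> a) = a)"

definition kappaP :: "('a, 'r) struct \<Rightarrow> nat" where
  "kappaP S = (LEAST k. k \<ge> 1 \<and> (\<exists>\<alpha>. Pk_coalgebra k S \<alpha>))"

definition gaifman_adj :: "('a, 'r) struct \<Rightarrow> 'a \<Rightarrow> 'a \<Rightarrow> bool" where
  "gaifman_adj S a b \<longleftrightarrow> a \<noteq> b \<and> (\<exists>r. \<exists>t\<in>snd S r. a \<in> set t \<and> b \<in> set t)"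

definition rooted_tree :: "nat set \<Rightarrow> (nat \<Rightarrow> nat \<Rightarrow> bool) \<Rightarrow> bool" where
  "rooted_tree T le \<longleftrightarrow> finite T
     \<and> (\<forall>x\<in>T. le x x)
     \<and> (\<forall>x\<in>T. \<forall>y\<in>T. le x y \<and> le y x \<longrightarrow> x = y)
     \<and> (\<forall>x\<in>T. \<forall>y\<in>T. \<forall>z\<in>T. le x y \<and> le y z \<longrightarrow> le x z)
     \<and> (\<exists>r\<in>T. \<forall>x\<in>T. le r x)
     \<and> (\<forall>x\<in>T. \<forall>y\<in>T. \<forall>z\<in>T. le y x \<and> le z x \<longrightarrow> le y z \<or> le z y)"

definition on_tree_path :: "nat set \<Rightarrow> (nat \<Rightarrow> nat \<Rightarrow> bool) \<Rightarrow> nat \<Rightarrow> nat \<Rightarrow> nat \<Rightarrow> bool" where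
  "on_tree_path T le x y z \<longleftrightarrow> z \<in> T \<and> (le z x \<or> le z y)
     \<and> (\<forall>w\<in>T. le w x \<and> le w y \<longrightarrow> le w z)"

definition tree_decomposition ::
  "'a set \<Rightarrow> ('a \<Rightarrow> 'a \<Rightarrow> bool) \<Rightarrow> nat set \<Rightarrow> (nat \<Rightarrow> nat \<Rightarrow> bool) \<Rightarrow> (nat \<Rightarrow> 'a set) \<Rightarrow> bool" where
  "tree_decomposition V E T le bag \<longleftrightarrow> rooted_tree T le
     \<and> (\<forall>x\<in>T. bag x \<subseteq> V)
     \<and> (\<forall>v\<in>V. \<exists>x\<in>T. v \<in> bag x)
     \<and> (\<forall>v\<in>V. \<forall>w\<in>V. E v w \<longrightarrow> (\<exists>x\<in>T. v \<in> bag x \<and> w \<in> bag x))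
     \<and> (\<forall>v x y z. x \<in> T \<and> y \<in> T \<and> v \<in> bag x \<and> v \<in> bag y \<and> on_tree_path T le x y z
           \<longrightarrow> v \<in> bag z)"

definition decomp_width :: "nat set \<Rightarrow> (nat \<Rightarrow> 'a set) \<Rightarrow> int" where
  "decomp_width T bag = int (Max ((\<lambda>x. card (bag x)) ` T)) - 1"

definition treewidth :: "'a set \<Rightarrow> ('a \<Rightarrow> 'a \<Rightarrow> bool) \<Rightarrow> int" where
  "treewidth V E = (LEAST w. \<exists>T le bag. tree_decomposition V E T le bag \<and> w = decomp_width T bag)"

definition tw :: "('a, 'r) struct \<Rightarrow> int" where
  "tw S = treewidth (fst S) (gaifman_adj S)"

end

theory Submission
  imports Defs "HOL-Library.Countable_Set" "HOL-Library.Product_Lexorder"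
begin

text \<open>
  A coalgebra \<open>\<alpha>\<close> assigns to every element \<open>a\<close> a play of the \<open>k\<close>-pebble game ending in \<open>a\<close>,
  and the comultiplication law makes these plays prefix-closed: the play of any element occurring
  in \<open>\<alpha> a\<close> is a prefix of \<open>\<alpha> a\<close>. The plays thus form a forest under the prefix order. Adding a
  root and giving the node of \<open>a\<close> the bag of elements whose pebble is still on the board at the end
  of \<open>\<alpha> a\<close> yields a tree decomposition with bags of size at most \<open>k\<close>; the homomorphism condition
  puts every tuple into a single bag.

  Conversely, given a tree decomposition with bags of size at most \<open>k\<close>, order the elements by the
  depth of the top node whose bag contains them (ties broken arbitrarily), and let the play of \<open>v\<close>
  list the elements preceding \<open>v\<close> whose top node is an ancestor of that of \<open>v\<close>. Pebbles are
  chosen by a greedy colouring in which \<open>u\<close> and \<open>w\<close> must differ whenever \<open>u\<close> precedes \<open>w\<close> and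
  lies in the top bag of \<open>w\<close>; there are fewer than \<open>k\<close> such \<open>u\<close>. Connectivity of the bags then
  ensures that the pebble of an element of a tuple is not reused before the play reaches the other
  elements of the tuple.
\<close>

lemma ex_notin_atLeastAtMost:
  assumes "finite C" "card C < k"
  shows "\<exists>c\<in>{1..k}. c \<notin> C"
proof (rule ccontr)
  assume "\<not> (\<exists>c\<in>{1..k}. c \<notin> C)"
  then have "card {1..k} \<le> card C"
    using card_mono[OF assms(1)] by blast
  then show False
    using assms(2) by simp
qed

lemma greedy_colouring:
  fixes key :: "'a \<Rightarrow> 'b::linorder"
  assumes "finite V"
    and "\<And>u w. u \<in> V \<Longrightarrow> w \<in> V \<Longrightarrow> N u w \<Longrightarrow> key u < key w"
    and "\<And>w. w \<in> V \<Longrightarrow> card {u\<in>V. N u w} < k"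
  shows "\<exists>c. (\<forall>v\<in>V. c v \<in> {1..k}) \<and> (\<forall>u\<in>V. \<forall>w\<in>V. N u w \<longrightarrow> c u \<noteq> c w)"
  using assms
proof (induction "card V" arbitrary: V rule: less_induct)
  case less
  show ?case
  proof (cases "V = {}")
    case False
    obtain w where w: "w \<in> V" "key w = Max (key ` V)"
      using False less.prems(1) by (metis (mono_tags, lifting) Max_in finite_imageI image_iff image_is_empty)
    define V' where "V' = V - {w}"
    have "\<exists>c. (\<forall>v\<in>V'. c v \<in> {1..k}) \<and> (\<forall>u\<in>V'. \<forall>w\<in>V'. N u w \<longrightarrow> c u \<noteq> c w)"
    proof (rule less.hyps)
      show "card V' < card V"
        using w less.prems(1) unfolding V'_def by (meson card_Diff1_less)
      show "finite V'"
        using less.prems(1) unfolding V'_def by simp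
      show "\<And>u w. u \<in> V' \<Longrightarrow> w \<in> V' \<Longrightarrow> N u w \<Longrightarrow> key u < key w"
        using less.prems(2) unfolding V'_def by blast
      fix w' assume "w' \<in> V'"
      have "card {u\<in>V'. N u w'} \<le> card {u\<in>V. N u w'}"
        by (rule card_mono) (use less.prems(1) in \<open>auto simp: V'_def\<close>)
      also have "\<dots> < k"
        using less.prems(3) \<open>w' \<in> V'\<close> unfolding V'_def by blast
      finally show "card {u\<in>V'. N u w'} < k" .
    qed
    then obtain c where c: "\<forall>v\<in>V'. c v \<in> {1..k}" "\<forall>u\<in>V'. \<forall>w\<in>V'. N u w \<longrightarrow> c u \<noteq> c w"
      by blast
    have "card (c ` {u\<in>V. N u w}) \<le> card {u\<in>V. N u w}"
      by (rule card_image_le) (use less.prems(1) in simp)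
    also have "\<dots> < k"
      using less.prems(3) w(1) by blast
    finally have "\<exists>col\<in>{1..k}. col \<notin> c ` {u\<in>V. N u w}"
      by (rule ex_notin_atLeastAtMost[rotated]) (use less.prems(1) in simp)
    then obtain col where col: "col \<in> {1..k}" "col \<notin> c ` {u\<in>V. N u w}"
      by blast
    have not_w: "u \<noteq> w" if "u \<in> V" "w' \<in> V" "N u w'" for u w'
    proof -
      have "key w' \<le> key w" using w(2) less.prems(1) that(2) by simp
      then show ?thesis using less.prems(2)[OF that] by auto
    qed
    have "(c(w := col)) u \<noteq> (c(w := col)) w'" if "u \<in> V" "w' \<in> V" "N u w'" for u w'
      using that not_w[OF that] c col unfolding V'_def by (cases "w' = w") auto
    moreover have "(c(w := col)) v \<in> {1..k}" if "v \<in> V" for v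
      using that c col unfolding V'_def by auto
    ultimately show ?thesis by blast
  qed simp
qed

lemma prefix_filter_filter:
  assumes "sorted_wrt R L"
    and "\<forall>x\<in>set L. P x \<longrightarrow> Q x"
    and "\<forall>a\<in>set L. \<forall>b\<in>set L. Q a \<and> \<not> P a \<and> P b \<longrightarrow> \<not> R a b"
  shows "prefix (filter P L) (filter Q L)"
  using assms
proof (induction L)
  case (Cons x xs)
  show ?case
  proof (cases "Q x \<and> \<not> P x")
    case True
    then have "filter P xs = []"
      using Cons.prems by (auto simp: filter_empty_conv)
    then show ?thesis using True by simp
  next
    case False
    then show ?thesis using Cons by auto
  qed
qed simp

lemma prefix_eq_take_Suc:
  assumes "distinct xs" "prefix ys xs" "ys \<noteq> []" "i < length xs" "last ys = xs ! i"
  shows "ys = take (Suc i) xs"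
proof -
  define m where "m = length ys"
  have ys: "ys = take m xs"
    using assms(2) unfolding m_def by (metis append_eq_conv_conj prefix_def)
  have m: "0 < m" "m \<le> length xs"
    using assms(2,3) prefix_length_le unfolding m_def by auto
  then have "last ys = xs ! (m - 1)"
    using ys by (cases m) (auto simp: take_Suc_conv_app_nth)
  then have "m - 1 = i"
    using assms(1,4,5) m nth_eq_iff_index_eq by (metis diff_less less_le_trans zero_less_one)
  then have "m = Suc i" using m by simp
  then show ?thesis using ys by simp
qed

lemma nth_in_set_drop: "n \<le> j \<Longrightarrow> j < length xs \<Longrightarrow> xs ! j \<in> set (drop n xs)"
  using nth_mem[of "j - n" "drop n xs"] by simp

lemma rooted_tree_add_root:
  assumes h: "bij_betw (\<lambda>i. h (Suc i)) {..<n} V"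
    and refl: "\<And>v. v \<in> V \<Longrightarrow> R v v"
    and antisym: "\<And>v w. v \<in> V \<Longrightarrow> w \<in> V \<Longrightarrow> R v w \<Longrightarrow> R w v \<Longrightarrow> v = w"
    and trans: "\<And>u v w. u \<in> V \<Longrightarrow> v \<in> V \<Longrightarrow> w \<in> V \<Longrightarrow> R u v \<Longrightarrow> R v w \<Longrightarrow> R u w"
    and chain: "\<And>u v w. u \<in> V \<Longrightarrow> v \<in> V \<Longrightarrow> w \<in> V \<Longrightarrow> R v u \<Longrightarrow> R w u \<Longrightarrow> R v w \<or> R w v"
  shows "rooted_tree {0..n} (\<lambda>x y. x = 0 \<or> (y \<noteq> 0 \<and> R (h x) (h y)))"
proof -
  have in_V: "h x \<in> V" if "x \<in> {0..n}" "x \<noteq> 0" for x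
    using that bij_betw_apply[OF h, of "x - 1"] by auto
  have inj: "x = y" if "x \<in> {0..n}" "y \<in> {0..n}" "x \<noteq> 0" "y \<noteq> 0" "h x = h y" for x y
  proof -
    have "x - 1 = y - 1"
      using that inj_onD[OF bij_betw_imp_inj_on[OF h], of "x - 1" "y - 1"] by simp
    then show ?thesis using that by simp
  qed
  let ?le = "\<lambda>x y. x = 0 \<or> (y \<noteq> 0 \<and> R (h x) (h y))"
  have "?le x x" if "x \<in> {0..n}" for x
    using that in_V[of x] refl by auto
  moreover have "x = y" if "x \<in> {0..n}" "y \<in> {0..n}" "?le x y" "?le y x" for x y
    using that in_V[of x] in_V[of y] antisym[of "h x" "h y"] inj[of x y] by auto
  moreover have "?le x z"
    if "x \<in> {0..n}" "y \<in> {0..n}" "z \<in> {0..n}" "?le x y" "?le y z" for x y z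
    using that in_V[of x] in_V[of y] in_V[of z] trans[of "h x" "h y" "h z"]
    by auto
  moreover have "?le y z \<or> ?le z y"
    if "x \<in> {0..n}" "y \<in> {0..n}" "z \<in> {0..n}" "?le y x" "?le z x" for x y z
    using that in_V[of x] in_V[of y] in_V[of z] chain[of "h x" "h y" "h z"]
    by auto
  moreover have "\<exists>r\<in>{0..n}. \<forall>x\<in>{0..n}. ?le r x" by auto
  ultimately show ?thesis
    unfolding rooted_tree_def by blast
qed

definition pebble_kept :: "(nat \<times> 'a) list \<Rightarrow> (nat \<times> 'a) list \<Rightarrow> bool" where
  "pebble_kept s t \<longleftrightarrow> prefix s t \<and> fst (last s) \<notin> fst ` set (drop (length s) t)"

lemma pebble_kept_refl: "pebble_kept s s"
  by (simp add: pebble_kept_def)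

lemma pebble_kept_prefix:
  assumes "pebble_kept s u" "prefix s t" "prefix t u"
  shows "pebble_kept s t"
proof -
  have "prefix (drop (length s) t) (drop (length s) u)"
    using assms(3) by (auto simp: prefix_def)
  then show ?thesis
    using assms(1,2) set_mono_prefix unfolding pebble_kept_def by blast
qed

definition pebbled :: "(nat \<times> 'a) list \<Rightarrow> 'a set" where
  "pebbled s = (\<lambda>i. snd (s!i)) ` {i. i < length s \<and> fst (s!i) \<notin> fst ` set (drop (Suc i) s)}"

lemma card_pebbled_le:
  assumes "set s \<subseteq> {1..k} \<times> A"
  shows "card (pebbled s) \<le> k"
proof -
  define I where "I = {i. i < length s \<and> fst (s!i) \<notin> fst ` set (drop (Suc i) s)}"
  have later: "fst (s!i) \<noteq> fst (s!j)" if "i \<in> I" "i < j" "j < length s" for i j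
    using that nth_in_set_drop[of "Suc i" j s] unfolding I_def by force
  have "inj_on (\<lambda>i. fst (s!i)) I"
  proof (rule inj_onI)
    fix i j assume i: "i \<in> I" and j: "j \<in> I" and eq: "fst (s!i) = fst (s!j)"
    have "\<not> i < j" using later[OF i, of j] j eq unfolding I_def by auto
    moreover have "\<not> j < i" using later[OF j, of i] i eq unfolding I_def by auto
    ultimately show "i = j" by simp
  qed
  then have "card I = card ((\<lambda>i. fst (s!i)) ` I)"
    by (simp add: card_image)
  also have "\<dots> \<le> card {1..k}"
    using assms nth_mem unfolding I_def by (intro card_mono) fastforce+
  finally have "card I \<le> k" by simp
  moreover have "card (pebbled s) \<le> card I"
    unfolding pebbled_def I_def[symmetric] by (rule card_image_le) (simp add: I_def)
  ultimately show ?thesis by simp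
qed

section \<open>From a coalgebra to a tree decomposition\<close>

locale finite_Pk_coalgebra =
  fixes S :: "('a, 'r) struct" and k :: nat and \<alpha> :: "'a \<Rightarrow> (nat \<times> 'a) list"
  assumes finite_universe: "finite (fst S)" and coalgebra: "Pk_coalgebra k S \<alpha>"
begin

lemma alpha_in_univ: "a \<in> fst S \<Longrightarrow> \<alpha> a \<noteq> [] \<and> set (\<alpha> a) \<subseteq> {1..k} \<times> fst S"
  using coalgebra unfolding Pk_coalgebra_def is_hom_def Pk_def Pk_univ_def by auto

lemma snd_last_alpha: "a \<in> fst S \<Longrightarrow> snd (last (\<alpha> a)) = a"
  using coalgebra unfolding Pk_coalgebra_def eps_def by blast

lemma alpha_nth:
  assumes a: "a \<in> fst S" and i: "i < length (\<alpha> a)"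
  shows "\<alpha> (snd (\<alpha> a ! i)) = take (Suc i) (\<alpha> a)"
proof -
  have "delta (\<alpha> a) ! i = Pk_map \<alpha> (\<alpha> a) ! i"
    using coalgebra a unfolding Pk_coalgebra_def by simp
  then show ?thesis
    using i unfolding delta_def Pk_map_def by (simp add: case_prod_beta)
qed

lemma pebbled_alpha_iff:
  assumes u: "u \<in> fst S"
  shows "v \<in> pebbled (\<alpha> u) \<longleftrightarrow> v \<in> fst S \<and> pebble_kept (\<alpha> v) (\<alpha> u)"
proof
  assume "v \<in> pebbled (\<alpha> u)"
  then obtain i where i: "i < length (\<alpha> u)" "fst (\<alpha> u ! i) \<notin> fst ` set (drop (Suc i) (\<alpha> u))"
    and v: "v = snd (\<alpha> u ! i)"
    unfolding pebbled_def by blast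
  have v_take: "\<alpha> v = take (Suc i) (\<alpha> u)"
    using alpha_nth[OF u i(1)] v by simp
  then have "prefix (\<alpha> v) (\<alpha> u)"
    by (simp add: take_is_prefix)
  moreover have "fst (last (\<alpha> v)) \<notin> fst ` set (drop (length (\<alpha> v)) (\<alpha> u))"
    using i v_take by (simp add: take_Suc_conv_app_nth)
  moreover have "v \<in> fst S"
    using alpha_in_univ[OF u] i(1) v nth_mem by fastforce
  ultimately show "v \<in> fst S \<and> pebble_kept (\<alpha> v) (\<alpha> u)"
    unfolding pebble_kept_def by blast
next
  assume "v \<in> fst S \<and> pebble_kept (\<alpha> v) (\<alpha> u)"
  then have v: "v \<in> fst S" and kept: "pebble_kept (\<alpha> v) (\<alpha> u)" by auto
  obtain zs where zs: "\<alpha> u = \<alpha> v @ zs"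
    using kept unfolding pebble_kept_def prefix_def by blast
  define i where "i = length (\<alpha> v) - 1"
  have ne: "\<alpha> v \<noteq> []" using alpha_in_univ[OF v] by blast
  have i: "i < length (\<alpha> u)" "Suc i = length (\<alpha> v)" "\<alpha> u ! i = last (\<alpha> v)"
    using zs ne unfolding i_def by (cases "\<alpha> v" rule: rev_cases; simp add: nth_append)+
  then have "fst (\<alpha> u ! i) \<notin> fst ` set (drop (Suc i) (\<alpha> u))"
    using kept unfolding pebble_kept_def by simp
  moreover have "snd (\<alpha> u ! i) = v"
    using i snd_last_alpha[OF v] by simp
  ultimately show "v \<in> pebbled (\<alpha> u)"
    unfolding pebbled_def using i(1) by blast
qed

lemma
  assumes "t \<in> snd S r" "a \<in> set t" "b \<in> set t"
  shows prefix_alpha_tuple: "prefix (\<alpha> a) (\<alpha> b) \<or> prefix (\<alpha> b) (\<alpha> a)"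
    and pebble_kept_alpha_tuple: "prefix (\<alpha> a) (\<alpha> b) \<Longrightarrow> pebble_kept (\<alpha> a) (\<alpha> b)"
proof -
  obtain i j where ij: "i < length t" "j < length t" "a = t ! i" "b = t ! j"
    using assms(2,3) by (metis in_set_conv_nth)
  have "map \<alpha> t \<in> Pk_rel k S r"
    using coalgebra assms(1) unfolding Pk_coalgebra_def is_hom_def Pk_def by auto
  then show "prefix (\<alpha> a) (\<alpha> b) \<or> prefix (\<alpha> b) (\<alpha> a)"
    and "prefix (\<alpha> a) (\<alpha> b) \<Longrightarrow> pebble_kept (\<alpha> a) (\<alpha> b)"
    using ij unfolding Pk_rel_def pebble_kept_def by auto
qed

text \<open>Node 0 is an added root, node \<open>i + 1\<close> carries the \<open>i\<close>-th element of the universe,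
  and the tree order is the prefix order of the plays assigned by \<open>\<alpha>\<close>.\<close>

definition elem :: "nat \<Rightarrow> 'a" where
  "elem x = from_nat_into (fst S) (x - 1)"

definition node :: "'a \<Rightarrow> nat" where
  "node v = Suc (to_nat_on (fst S) v)"

definition nodes :: "nat set" where
  "nodes = {0..card (fst S)}"

definition node_le :: "nat \<Rightarrow> nat \<Rightarrow> bool" where
  "node_le x y \<longleftrightarrow> x = 0 \<or> (y \<noteq> 0 \<and> prefix (\<alpha> (elem x)) (\<alpha> (elem y)))"

definition node_bag :: "nat \<Rightarrow> 'a set" where
  "node_bag x = (if x = 0 then {} else pebbled (\<alpha> (elem x)))"

lemma bij_betw_elem: "bij_betw (\<lambda>i. elem (Suc i)) {..<card (fst S)} (fst S)"
  unfolding elem_def using bij_betw_from_nat_into_finite[OF finite_universe] by simp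

lemma elem_in_universe: "x \<in> nodes \<Longrightarrow> x \<noteq> 0 \<Longrightarrow> elem x \<in> fst S"
  using bij_betw_apply[OF bij_betw_elem, of "x - 1"] unfolding nodes_def by auto

lemma node_in_nodes: "v \<in> fst S \<Longrightarrow> node v \<in> nodes"
  using bij_betw_apply[OF to_nat_on_finite[OF finite_universe], of v]
  unfolding node_def nodes_def by (simp add: Suc_leI)

lemma elem_node: "v \<in> fst S \<Longrightarrow> elem (node v) = v"
  unfolding elem_def node_def using countable_finite[OF finite_universe] by simp

lemma in_node_bag_iff:
  "x \<in> nodes \<Longrightarrow> x \<noteq> 0 \<Longrightarrow> v \<in> node_bag x \<longleftrightarrow> v \<in> fst S \<and> pebble_kept (\<alpha> v) (\<alpha> (elem x))"
  unfolding node_bag_def using pebbled_alpha_iff elem_in_universe by simp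

lemma in_own_node_bag: "v \<in> fst S \<Longrightarrow> v \<in> node_bag (node v)"
  using in_node_bag_iff node_in_nodes elem_node pebble_kept_refl unfolding node_def by simp

lemma rooted_tree_nodes: "rooted_tree nodes node_le"
  unfolding nodes_def node_le_def
proof (rule rooted_tree_add_root[where h = elem and R = "\<lambda>a b. prefix (\<alpha> a) (\<alpha> b)"])
  show "bij_betw (\<lambda>i. elem (Suc i)) {..<card (fst S)} (fst S)"
    by (rule bij_betw_elem)
  show "\<And>u v w. u \<in> fst S \<Longrightarrow> v \<in> fst S \<Longrightarrow> w \<in> fst S \<Longrightarrow>
      prefix (\<alpha> v) (\<alpha> u) \<Longrightarrow> prefix (\<alpha> w) (\<alpha> u) \<Longrightarrow> prefix (\<alpha> v) (\<alpha> w) \<or> prefix (\<alpha> w) (\<alpha> v)"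
    using prefix_same_cases by blast
  show "\<And>v w. v \<in> fst S \<Longrightarrow> w \<in> fst S \<Longrightarrow> prefix (\<alpha> v) (\<alpha> w) \<Longrightarrow> prefix (\<alpha> w) (\<alpha> v) \<Longrightarrow> v = w"
    by (metis prefix_order.antisym snd_last_alpha)
qed (auto intro: prefix_order.trans)

lemma node_bag_connected:
  assumes "x \<in> nodes" "y \<in> nodes" "v \<in> node_bag x" "v \<in> node_bag y"
    and path: "on_tree_path nodes node_le x y z"
  shows "v \<in> node_bag z"
proof -
  have "x \<noteq> 0" "y \<noteq> 0" using assms(3,4) unfolding node_bag_def by (auto split: if_splits)
  then have v: "v \<in> fst S" and kept: "\<And>u. u \<in> {x, y} \<Longrightarrow> pebble_kept (\<alpha> v) (\<alpha> (elem u))"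
    using assms in_node_bag_iff by auto
  have "node_le (node v) x" "node_le (node v) y"
    using kept elem_node[OF v] \<open>x \<noteq> 0\<close> \<open>y \<noteq> 0\<close> unfolding node_le_def pebble_kept_def by auto
  then have "node_le (node v) z"
    using path node_in_nodes[OF v] unfolding on_tree_path_def by blast
  then have z: "z \<noteq> 0" and v_z: "prefix (\<alpha> v) (\<alpha> (elem z))"
    using elem_node[OF v] unfolding node_le_def node_def by auto
  obtain u where "u \<in> {x, y}" "node_le z u"
    using path unfolding on_tree_path_def by blast
  then have "pebble_kept (\<alpha> v) (\<alpha> (elem z))"
    using kept z v_z pebble_kept_prefix unfolding node_le_def by blast
  then show ?thesis
    using path z in_node_bag_iff v unfolding on_tree_path_def by auto
qed

lemma tuple_in_node_bag:
  assumes t: "t \<in> snd S r" "v \<in> set t" "w \<in> set t" and "v \<in> fst S" "w \<in> fst S"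
  shows "\<exists>x\<in>nodes. v \<in> node_bag x \<and> w \<in> node_bag x"
proof -
  have "a \<in> node_bag (node b) \<and> b \<in> node_bag (node b)"
    if "a \<in> set t" "b \<in> set t" "a \<in> fst S" "b \<in> fst S" "prefix (\<alpha> a) (\<alpha> b)" for a b
    using that in_node_bag_iff[OF node_in_nodes] elem_node in_own_node_bag
      pebble_kept_alpha_tuple[OF t(1)] unfolding node_def by simp
  then show ?thesis
    using prefix_alpha_tuple[OF t] node_in_nodes assms by metis
qed

lemma tree_decomposition_nodes: "tree_decomposition (fst S) (gaifman_adj S) nodes node_le node_bag"
  unfolding tree_decomposition_def
proof (intro conjI ballI allI impI)
  show "node_bag x \<subseteq> fst S" if "x \<in> nodes" for x
    using that in_node_bag_iff unfolding node_bag_def by auto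
  show "\<exists>x\<in>nodes. v \<in> node_bag x" if "v \<in> fst S" for v
    using that in_own_node_bag node_in_nodes by blast
  show "\<exists>x\<in>nodes. v \<in> node_bag x \<and> w \<in> node_bag x"
    if "v \<in> fst S" "w \<in> fst S" "gaifman_adj S v w" for v w
    using that tuple_in_node_bag unfolding gaifman_adj_def by blast
qed (use rooted_tree_nodes node_bag_connected in blast)+

lemma card_node_bag_le:
  assumes "x \<in> nodes"
  shows "card (node_bag x) \<le> k"
proof (cases "x = 0")
  case False
  then show ?thesis
    using card_pebbled_le[of "\<alpha> (elem x)" k "fst S"] alpha_in_univ[OF elem_in_universe[OF assms False]]
    unfolding node_bag_def by simp
qed (simp add: node_bag_def)

end

lemma tree_decomposition_of_Pk_coalgebra:
  assumes "finite (fst S)" and "Pk_coalgebra k S \<alpha>"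
  shows "\<exists>T le bag. tree_decomposition (fst S) (gaifman_adj S) T le bag \<and> (\<forall>x\<in>T. card (bag x) \<le> k)"
proof -
  interpret finite_Pk_coalgebra S k \<alpha>
    using assms by unfold_locales
  show ?thesis
    using tree_decomposition_nodes card_node_bag_le by blast
qed

section \<open>From a tree decomposition to a coalgebra\<close>

locale finite_rooted_tree =
  fixes T :: "nat set" and le :: "nat \<Rightarrow> nat \<Rightarrow> bool"
  assumes rooted_tree: "rooted_tree T le"
begin

lemma finite_nodes: "finite T"
  using rooted_tree unfolding rooted_tree_def by blast

lemma tree_refl: "x \<in> T \<Longrightarrow> le x x"
  using rooted_tree unfolding rooted_tree_def by blast

lemma tree_antisym: "x \<in> T \<Longrightarrow> y \<in> T \<Longrightarrow> le x y \<Longrightarrow> le y x \<Longrightarrow> x = y"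
  using rooted_tree unfolding rooted_tree_def by blast

lemma tree_trans: "x \<in> T \<Longrightarrow> y \<in> T \<Longrightarrow> z \<in> T \<Longrightarrow> le x y \<Longrightarrow> le y z \<Longrightarrow> le x z"
  using rooted_tree unfolding rooted_tree_def by blast

lemma tree_root: "\<exists>r\<in>T. \<forall>x\<in>T. le r x"
  using rooted_tree unfolding rooted_tree_def by blast

lemma ancestors_linear:
  "x \<in> T \<Longrightarrow> y \<in> T \<Longrightarrow> z \<in> T \<Longrightarrow> le y x \<Longrightarrow> le z x \<Longrightarrow> le y z \<or> le z y"
  using rooted_tree unfolding rooted_tree_def by blast

definition depth :: "nat \<Rightarrow> nat" where
  "depth x = card {y\<in>T. le y x}"

lemma depth_less:
  assumes "x \<in> T" "y \<in> T" "le x y" "x \<noteq> y"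
  shows "depth x < depth y"
proof -
  have "{z\<in>T. le z x} \<subseteq> {z\<in>T. le z y}"
    using assms tree_trans by blast
  moreover have "y \<in> {z\<in>T. le z y} - {z\<in>T. le z x}"
    using assms tree_antisym tree_refl by blast
  ultimately have "{z\<in>T. le z x} \<subset> {z\<in>T. le z y}"
    by blast
  then show ?thesis
    unfolding depth_def using finite_nodes by (intro psubset_card_mono) auto
qed

lemma meet_on_tree_path:
  assumes x: "x \<in> T" and y: "y \<in> T"
  shows "\<exists>w. le w x \<and> le w y \<and> on_tree_path T le x y w"
proof -
  define C where "C = {c\<in>T. le c x \<and> le c y}"
  have "finite C" using finite_nodes unfolding C_def by simp
  moreover have "C \<noteq> {}" using tree_root x y unfolding C_def by blast
  ultimately have "Max (depth ` C) \<in> depth ` C" by (intro Max_in) auto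
  then obtain w where w: "w \<in> C" "depth w = Max (depth ` C)" by auto
  have deepest: "depth c \<le> depth w" if "c \<in> C" for c
    using \<open>finite C\<close> that w(2) by simp
  have "le c w" if c: "c \<in> C" for c
  proof -
    have "le c w \<or> le w c"
      using c w x ancestors_linear[of x c w] unfolding C_def by blast
    moreover have "\<not> (le w c \<and> w \<noteq> c)"
      using c w deepest[OF c] depth_less[of w c] unfolding C_def by auto
    ultimately show ?thesis
      using c tree_refl unfolding C_def by blast
  qed
  then show ?thesis
    using w unfolding C_def on_tree_path_def by blast
qed

end

locale tree_decomposed_struct = finite_rooted_tree T le
  for T :: "nat set" and le :: "nat \<Rightarrow> nat \<Rightarrow> bool" +
  fixes ar :: "'r \<Rightarrow> nat" and S :: "('a, 'r) struct" and bag :: "nat \<Rightarrow> 'a set"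
  assumes is_struct: "is_struct ar S"
    and finite_universe: "finite (fst S)"
    and decomposition: "tree_decomposition (fst S) (gaifman_adj S) T le bag"
begin

lemma tuple_subset: "t \<in> snd S r \<Longrightarrow> set t \<subseteq> fst S"
  using is_struct unfolding is_struct_def by blast

lemma bag_subset: "x \<in> T \<Longrightarrow> bag x \<subseteq> fst S"
  using decomposition unfolding tree_decomposition_def by blast

lemma bag_cover: "v \<in> fst S \<Longrightarrow> \<exists>x\<in>T. v \<in> bag x"
  using decomposition unfolding tree_decomposition_def by blast

lemma bag_edge:
  "v \<in> fst S \<Longrightarrow> w \<in> fst S \<Longrightarrow> gaifman_adj S v w \<Longrightarrow> \<exists>x\<in>T. v \<in> bag x \<and> w \<in> bag x"
  using decomposition unfolding tree_decomposition_def by blast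

lemma bag_connected:
  "x \<in> T \<Longrightarrow> y \<in> T \<Longrightarrow> v \<in> bag x \<Longrightarrow> v \<in> bag y \<Longrightarrow> on_tree_path T le x y z \<Longrightarrow> v \<in> bag z"
  using decomposition unfolding tree_decomposition_def by blast

lemma top_node_exists:
  assumes v: "v \<in> fst S"
  shows "\<exists>m\<in>T. v \<in> bag m \<and> (\<forall>x\<in>T. v \<in> bag x \<longrightarrow> le m x)"
proof -
  obtain x0 where "x0 \<in> T" "v \<in> bag x0" using bag_cover v by blast
  then obtain m where m: "m \<in> T" "v \<in> bag m"
    and highest: "\<And>y. y \<in> T \<Longrightarrow> v \<in> bag y \<Longrightarrow> depth m \<le> depth y"
    using ex_has_least_nat[of "\<lambda>x. x \<in> T \<and> v \<in> bag x" x0 depth] by blast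
  have "le m x" if x: "x \<in> T" "v \<in> bag x" for x
  proof -
    obtain w where w: "le w m" "le w x" "on_tree_path T le m x w"
      using meet_on_tree_path[OF m(1) x(1)] by blast
    then have "w \<in> T" "v \<in> bag w"
      using bag_connected[OF m(1) x(1) m(2) x(2)] unfolding on_tree_path_def by auto
    then have "w = m"
      using highest depth_less[of w m] m(1) w(1) by fastforce
    then show ?thesis using w by blast
  qed
  then show ?thesis using m by blast
qed

definition top_node :: "'a \<Rightarrow> nat" where
  "top_node v = (SOME m. m \<in> T \<and> v \<in> bag m \<and> (\<forall>x\<in>T. v \<in> bag x \<longrightarrow> le m x))"

lemma top_node:
  assumes "v \<in> fst S"
  shows "top_node v \<in> T" "v \<in> bag (top_node v)"
    and "\<And>x. x \<in> T \<Longrightarrow> v \<in> bag x \<Longrightarrow> le (top_node v) x"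
  using someI_ex[OF top_node_exists[OF assms, unfolded Bex_def]]
  unfolding top_node_def by blast+

definition key :: "'a \<Rightarrow> nat \<times> nat" where
  "key u = (depth (top_node u), to_nat_on (fst S) u)"

lemma inj_on_key: "inj_on key (fst S)"
  using inj_on_to_nat_on[OF countable_finite[OF finite_universe]]
  unfolding key_def by (auto intro: inj_onI dest: inj_onD)

lemma key_less_of_top_node:
  assumes "u \<in> fst S" "w \<in> fst S" "le (top_node u) (top_node w)" "top_node u \<noteq> top_node w"
  shows "key u < key w"
  using depth_less[OF top_node(1)[OF assms(1)] top_node(1)[OF assms(2)]] assms(3,4)
  unfolding key_def by simp

definition precedes :: "'a \<Rightarrow> 'a \<Rightarrow> bool" where
  "precedes u w \<longleftrightarrow> le (top_node u) (top_node w) \<and> key u < key w"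

definition precedes_eq :: "'a \<Rightarrow> 'a \<Rightarrow> bool" where
  "precedes_eq u w \<longleftrightarrow> u = w \<or> precedes u w"

lemma precedes_eq_top_node:
  "u \<in> fst S \<Longrightarrow> precedes_eq u w \<Longrightarrow> le (top_node u) (top_node w)"
  unfolding precedes_eq_def precedes_def using tree_refl top_node(1) by auto

lemma precedes_eq_key: "precedes_eq u w \<Longrightarrow> key u \<le> key w"
  unfolding precedes_eq_def precedes_def by auto

lemma precedes_trans:
  assumes "u \<in> fst S" "v \<in> fst S" "w \<in> fst S" "precedes u v" "precedes v w"
  shows "precedes u w"
  using assms tree_trans[OF top_node(1)[OF assms(1)] top_node(1)[OF assms(2)] top_node(1)[OF assms(3)]]
  unfolding precedes_def by auto

lemma precedes_eq_trans:
  "u \<in> fst S \<Longrightarrow> v \<in> fst S \<Longrightarrow> w \<in> fst S \<Longrightarrow> precedes_eq u v \<Longrightarrow> precedes_eq v w \<Longrightarrow> precedes_eq u w"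
  using precedes_trans unfolding precedes_eq_def by blast

lemma precedes_eq_total:
  assumes u: "u \<in> fst S" and w: "w \<in> fst S" and x: "x \<in> T"
    and ux: "le (top_node u) x" and wx: "le (top_node w) x"
  shows "precedes_eq u w \<or> precedes_eq w u"
proof (cases "top_node u = top_node w")
  case True
  then have "le (top_node u) (top_node w)" "le (top_node w) (top_node u)"
    using tree_refl[OF top_node(1)[OF u]] by auto
  moreover have "key u \<noteq> key w \<or> u = w"
    using inj_on_key u w by (auto dest: inj_onD)
  ultimately show ?thesis
    unfolding precedes_eq_def precedes_def by auto
next
  case False
  have "le (top_node u) (top_node w) \<or> le (top_node w) (top_node u)"
    using ancestors_linear[OF x top_node(1)[OF u] top_node(1)[OF w] ux wx] .
  then show ?thesis
    using False key_less_of_top_node u w unfolding precedes_eq_def precedes_def by metis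
qed

lemma precedes_eq_tuple:
  assumes t: "t \<in> snd S r" "a \<in> set t" "b \<in> set t"
  shows "precedes_eq a b \<or> precedes_eq b a"
proof (cases "a = b")
  case False
  have a: "a \<in> fst S" and b: "b \<in> fst S" using tuple_subset t by auto
  moreover have "gaifman_adj S a b" unfolding gaifman_adj_def using False t by blast
  ultimately obtain x where x: "x \<in> T" "a \<in> bag x" "b \<in> bag x" using bag_edge by blast
  show ?thesis
    using precedes_eq_total[OF a b x(1) top_node(3)[OF a x(1,2)] top_node(3)[OF b x(1,3)]] .
qed (simp add: precedes_eq_def)

definition vertex_list :: "'a list" where
  "vertex_list = map (inv_into (fst S) key) (sorted_list_of_set (key ` fst S))"

lemma set_vertex_list: "set vertex_list = fst S"
  unfolding vertex_list_def using finite_universe inj_on_key by (simp add: inv_into_image_cancel)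

lemma map_key_vertex_list: "map key vertex_list = sorted_list_of_set (key ` fst S)"
  unfolding vertex_list_def map_map using finite_universe by (intro map_idI) (simp add: f_inv_into_f)

lemma sorted_vertex_list: "sorted_wrt (\<lambda>a b. key a < key b) vertex_list"
  using strict_sorted_list_of_set map_key_vertex_list by (metis sorted_wrt_map)

lemma distinct_vertex_list: "distinct vertex_list"
  using distinct_sorted_list_of_set map_key_vertex_list by (metis distinct_map)

definition branch :: "'a \<Rightarrow> 'a list" where
  "branch v = filter (\<lambda>u. precedes_eq u v) vertex_list"

lemma set_branch: "set (branch v) = {u \<in> fst S. precedes_eq u v}"
  unfolding branch_def using set_vertex_list by auto

lemma distinct_branch: "distinct (branch v)"
  unfolding branch_def using distinct_vertex_list by simp

lemma last_branch:
  assumes v: "v \<in> fst S"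
  shows "branch v \<noteq> [] \<and> last (branch v) = v"
proof -
  have v_in: "v \<in> set (branch v)" using set_branch v unfolding precedes_eq_def by auto
  then obtain ys z where yz: "branch v = ys @ [z]" by (metis rev_exhaust empty_iff list.set(1))
  have "z = v"
  proof (rule ccontr)
    assume "z \<noteq> v"
    then have "v \<in> set ys" using v_in yz by auto
    moreover have "sorted_wrt (\<lambda>a b. key a < key b) (branch v)"
      unfolding branch_def using sorted_vertex_list by (rule sorted_wrt_filter)
    ultimately have "key v < key z" using yz by (auto simp: sorted_wrt_append)
    moreover have "z \<in> set (branch v)" using yz by simp
    then have "precedes_eq z v" using set_branch by auto
    ultimately show False using precedes_eq_key by fastforce
  qed
  then show ?thesis using yz by simp
qed

lemma branch_prefix:
  assumes u: "u \<in> fst S" and v: "v \<in> fst S" and uv: "precedes_eq u v"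
  shows "prefix (branch u) (branch v)"
  unfolding branch_def
proof (rule prefix_filter_filter[OF sorted_vertex_list])
  show "\<forall>x\<in>set vertex_list. precedes_eq x u \<longrightarrow> precedes_eq x v"
    using precedes_eq_trans u v uv set_vertex_list by blast
  show "\<forall>a\<in>set vertex_list. \<forall>b\<in>set vertex_list.
      precedes_eq a v \<and> \<not> precedes_eq a u \<and> precedes_eq b u \<longrightarrow> \<not> key a < key b"
  proof (intro ballI impI)
    fix a b assume "a \<in> set vertex_list" "b \<in> set vertex_list"
      and ab: "precedes_eq a v \<and> \<not> precedes_eq a u \<and> precedes_eq b u"
    then have a: "a \<in> fst S" using set_vertex_list by auto
    have "precedes_eq u a"
      using precedes_eq_total[OF a u top_node(1)[OF v]] precedes_eq_top_node a u ab uv by blast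
    then have "key u < key a" using ab unfolding precedes_eq_def precedes_def by auto
    then show "\<not> key a < key b" using precedes_eq_key ab by fastforce
  qed
qed

lemma branch_nth:
  assumes v: "v \<in> fst S" and i: "i < length (branch v)"
  shows "branch (branch v ! i) = take (Suc i) (branch v)"
proof (rule prefix_eq_take_Suc[OF distinct_branch _ _ i])
  have "branch v ! i \<in> set (branch v)" using i by simp
  then have "branch v ! i \<in> fst S" "precedes_eq (branch v ! i) v" using set_branch by auto
  then show "prefix (branch (branch v ! i)) (branch v)" "branch (branch v ! i) \<noteq> []"
    "last (branch (branch v ! i)) = branch v ! i"
    using branch_prefix v last_branch by auto
qed

text \<open>Pebbles are a colouring of this graph; everything in conflict with \<open>w\<close> lies in the top
  bag of \<open>w\<close>, so \<open>k\<close> colours suffice.\<close>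

definition conflicts :: "'a \<Rightarrow> 'a \<Rightarrow> bool" where
  "conflicts u w \<longleftrightarrow> precedes u w \<and> u \<in> bag (top_node w)"

definition proper_colouring :: "nat \<Rightarrow> ('a \<Rightarrow> nat) \<Rightarrow> bool" where
  "proper_colouring k c \<longleftrightarrow>
     (\<forall>v\<in>fst S. c v \<in> {1..k}) \<and> (\<forall>u\<in>fst S. \<forall>w\<in>fst S. conflicts u w \<longrightarrow> c u \<noteq> c w)"

lemma proper_colouring_exists:
  assumes "\<forall>x\<in>T. card (bag x) \<le> k"
  shows "\<exists>c. proper_colouring k c"
  unfolding proper_colouring_def
proof (rule greedy_colouring[OF finite_universe, of conflicts key])
  show "\<And>u w. conflicts u w \<Longrightarrow> key u < key w"
    unfolding conflicts_def precedes_def by blast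
  fix w assume w: "w \<in> fst S"
  have top: "top_node w \<in> T" "w \<in> bag (top_node w)" using top_node[OF w] by auto
  have fin: "finite (bag (top_node w))" using bag_subset[OF top(1)] finite_universe finite_subset by blast
  have "{u\<in>fst S. conflicts u w} \<subseteq> bag (top_node w) - {w}"
    unfolding conflicts_def precedes_def by auto
  then have "card {u\<in>fst S. conflicts u w} \<le> card (bag (top_node w) - {w})"
    using fin by (intro card_mono) auto
  also have "\<dots> < card (bag (top_node w))" using fin top(2) by (rule card_Diff1_less)
  also have "\<dots> \<le> k" using assms top(1) by blast
  finally show "card {u\<in>fst S. conflicts u w} < k" .
qed

lemma conflicts_of_branch_suffix:
  assumes t: "t \<in> snd S r" "a \<in> set t" "b \<in> set t" and "a \<noteq> b"
    and zs: "branch b = branch a @ zs" and w_zs: "w \<in> set zs"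
  shows "conflicts a w"
proof -
  have a: "a \<in> fst S" and b: "b \<in> fst S" using tuple_subset t by auto
  have "w \<in> set (branch b)" using zs w_zs by simp
  then have w: "w \<in> fst S" and wb: "precedes_eq w b" using set_branch by auto
  have "w \<notin> set (branch a)" using distinct_branch[of b] zs w_zs by auto
  then have not_wa: "\<not> precedes_eq w a" using set_branch w by auto
  have "a \<in> set (branch a)" using last_branch[OF a] by (metis last_in_set)
  then have "a \<in> set (branch b)" using zs by simp
  then have "precedes_eq a b" using set_branch by auto
  then have "precedes_eq a w"
    using precedes_eq_total[OF a w top_node(1)[OF b]] precedes_eq_top_node a w wb not_wa by blast
  then have aw: "precedes a w" using not_wa unfolding precedes_eq_def by auto
  obtain x where x: "x \<in> T" "a \<in> bag x" "b \<in> bag x"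
    using bag_edge a b \<open>a \<noteq> b\<close> t unfolding gaifman_adj_def by blast
  have "le (top_node w) x"
    using tree_trans[OF top_node(1)[OF w] top_node(1)[OF b] x(1)] precedes_eq_top_node[OF w wb]
      top_node(3)[OF b x(1,3)] by blast
  moreover have "le c (top_node w)" if "c \<in> T" "le c (top_node a)" for c
    using tree_trans[OF that(1) top_node(1)[OF a] top_node(1)[OF w] that(2)] aw
    unfolding precedes_def by blast
  ultimately have "on_tree_path T le (top_node a) x (top_node w)"
    using top_node(1)[OF w] unfolding on_tree_path_def by blast
  then have "a \<in> bag (top_node w)"
    using bag_connected[OF top_node(1)[OF a] x(1) top_node(2)[OF a] x(2)] by blast
  then show ?thesis using aw unfolding conflicts_def by blast
qed

definition pebbling :: "('a \<Rightarrow> nat) \<Rightarrow> 'a \<Rightarrow> (nat \<times> 'a) list" where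
  "pebbling c v = map (\<lambda>u. (c u, u)) (branch v)"

lemma prefix_pebbling: "prefix (pebbling c a) (pebbling c b) \<Longrightarrow> prefix (branch a) (branch b)"
  using map_mono_prefix[of "pebbling c a" "pebbling c b" snd]
  unfolding pebbling_def by (simp add: comp_def)

lemma eps_pebbling: "v \<in> fst S \<Longrightarrow> eps (pebbling c v) = v"
  using last_branch unfolding pebbling_def eps_def by (simp add: last_map)

lemma pebbling_in_univ:
  "proper_colouring k c \<Longrightarrow> v \<in> fst S \<Longrightarrow> pebbling c v \<in> Pk_univ k (fst S)"
  using last_branch set_branch unfolding proper_colouring_def pebbling_def Pk_univ_def by auto

lemma pebble_kept_pebbling:
  assumes c: "proper_colouring k c" and t: "t \<in> snd S r" "a \<in> set t" "b \<in> set t"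
    and ab: "prefix (pebbling c a) (pebbling c b)"
  shows "pebble_kept (pebbling c a) (pebbling c b)"
proof (cases "a = b")
  case False
  have a: "a \<in> fst S" using tuple_subset t by auto
  obtain zs where zs: "branch b = branch a @ zs"
    using prefix_pebbling[OF ab] unfolding prefix_def by blast
  have "fst (last (pebbling c a)) = c a"
    using last_branch[OF a] unfolding pebbling_def by (simp add: last_map)
  moreover have "drop (length (pebbling c a)) (pebbling c b) = map (\<lambda>u. (c u, u)) zs"
    using zs unfolding pebbling_def by simp
  moreover have "c a \<notin> fst ` set (map (\<lambda>u. (c u, u)) zs)"
  proof (clarsimp)
    fix w assume w: "w \<in> set zs" and "c a = c w"
    have "w \<in> set (branch b)" using zs w by simp
    then have "w \<in> fst S" using set_branch by auto
    then show False
      using c conflicts_of_branch_suffix[OF t False zs w] a \<open>c a = c w\<close>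
      unfolding proper_colouring_def by blast
  qed
  ultimately show ?thesis
    using ab unfolding pebble_kept_def by simp
qed (simp add: pebble_kept_refl)

lemma pebbling_tuple:
  assumes c: "proper_colouring k c" and t: "t \<in> snd S r"
  shows "map (pebbling c) t \<in> Pk_rel k S r"
  unfolding Pk_rel_def
proof (intro CollectI conjI allI impI)
  have t_S: "set t \<subseteq> fst S" using tuple_subset[OF t] .
  then show "set (map (pebbling c) t) \<subseteq> Pk_univ k (fst S)"
    using pebbling_in_univ[OF c] by auto
  have "map eps (map (pebbling c) t) = t"
    using t_S eps_pebbling by (induction t) auto
  then show "map eps (map (pebbling c) t) \<in> snd S r" using t by simp
  fix i j assume i: "i < length (map (pebbling c) t)" and j: "j < length (map (pebbling c) t)"
  then have ij: "t ! i \<in> set t" "t ! j \<in> set t" "t ! i \<in> fst S" "t ! j \<in> fst S"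
    using t_S by auto
  show "prefix (map (pebbling c) t ! i) (map (pebbling c) t ! j) \<or>
      prefix (map (pebbling c) t ! j) (map (pebbling c) t ! i)"
    using precedes_eq_tuple[OF t ij(1,2)] branch_prefix ij(3,4) i j
    unfolding pebbling_def by (auto intro: map_mono_prefix)
  show "prefix (map (pebbling c) t ! i) (map (pebbling c) t ! j) \<Longrightarrow>
      fst (last (map (pebbling c) t ! i)) \<notin> fst ` set (drop (length (map (pebbling c) t ! i)) (map (pebbling c) t ! j))"
    using pebble_kept_pebbling[OF c t ij(1,2)] i j unfolding pebble_kept_def by simp
qed

lemma delta_pebbling:
  assumes v: "v \<in> fst S"
  shows "delta (pebbling c v) = Pk_map (pebbling c) (pebbling c v)"
proof (rule nth_equalityI)
  show "length (delta (pebbling c v)) = length (Pk_map (pebbling c) (pebbling c v))"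
    unfolding delta_def Pk_map_def by simp
  fix i assume "i < length (delta (pebbling c v))"
  then have i: "i < length (branch v)" unfolding delta_def pebbling_def by simp
  then show "delta (pebbling c v) ! i = Pk_map (pebbling c) (pebbling c v) ! i"
    using branch_nth[OF v i] unfolding delta_def Pk_map_def pebbling_def by (simp add: take_map)
qed

lemma Pk_coalgebra_of_tree_decomposition:
  assumes "\<forall>x\<in>T. card (bag x) \<le> k"
  shows "\<exists>\<alpha>. Pk_coalgebra k S \<alpha>"
proof -
  obtain c where c: "proper_colouring k c" using proper_colouring_exists[OF assms] ..
  have "Pk_coalgebra k S (pebbling c)"
    unfolding Pk_coalgebra_def is_hom_def Pk_def
    using pebbling_in_univ[OF c] pebbling_tuple[OF c] delta_pebbling eps_pebbling by simp
  then show ?thesis by blast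
qed

end

lemma tree_decomposition_single_bag: "tree_decomposition V E {0} (=) (\<lambda>_. V)"
  unfolding tree_decomposition_def rooted_tree_def on_tree_path_def by auto

lemma decomp_width_le:
  assumes "tree_decomposition V E T le bag" and "\<forall>x\<in>T. card (bag x) \<le> k"
  shows "decomp_width T bag \<le> int k - 1"
proof -
  have "finite T" "T \<noteq> {}"
    using assms(1) unfolding tree_decomposition_def rooted_tree_def by auto
  then have "Max ((\<lambda>x. card (bag x)) ` T) \<le> k"
    using assms(2) by (subst Max_le_iff) auto
  then show ?thesis
    unfolding decomp_width_def by simp
qed

lemma kappaP_le: "1 \<le> k \<Longrightarrow> Pk_coalgebra k S \<alpha> \<Longrightarrow> kappaP S \<le> k"
  unfolding kappaP_def by (rule Least_le) blast

lemma kappaP_le_decomp_width: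
  assumes "is_struct ar S" "finite (fst S)" "fst S \<noteq> {}"
    and td: "tree_decomposition (fst S) (gaifman_adj S) T le bag"
  shows "int (kappaP S) - 1 \<le> decomp_width T bag"
proof -
  have "rooted_tree T le" using td unfolding tree_decomposition_def by blast
  then interpret tree_decomposed_struct T le ar S bag
    using assms by unfold_locales
  define k where "k = Max ((\<lambda>x. card (bag x)) ` T)"
  have bags: "\<forall>x\<in>T. card (bag x) \<le> k"
    unfolding k_def using finite_nodes by simp
  obtain v x where "v \<in> bag x" "x \<in> T"
    using bag_cover assms(3) by blast
  moreover have "finite (bag x)"
    using bag_subset[OF \<open>x \<in> T\<close>] assms(2) finite_subset by blast
  ultimately have "1 \<le> card (bag x)"
    by (auto simp: Suc_le_eq card_gt_0_iff)
  then have "1 \<le> k"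
    using bags \<open>x \<in> T\<close> by (meson order.trans)
  then have "kappaP S \<le> k"
    using Pk_coalgebra_of_tree_decomposition[OF bags] kappaP_le by blast
  then show ?thesis
    unfolding decomp_width_def k_def by simp
qed

lemma ex_Pk_coalgebra_kappaP:
  assumes "is_struct ar S" "finite (fst S)" "fst S \<noteq> {}"
  shows "\<exists>\<alpha>. Pk_coalgebra (kappaP S) S \<alpha>"
proof -
  have "rooted_tree {0} (=)"
    using tree_decomposition_single_bag unfolding tree_decomposition_def by blast
  then interpret tree_decomposed_struct "{0}" "(=)" ar S "\<lambda>_. fst S"
    using assms tree_decomposition_single_bag by unfold_locales
  have "1 \<le> card (fst S) \<and> (\<exists>\<alpha>. Pk_coalgebra (card (fst S)) S \<alpha>)"
    using assms Pk_coalgebra_of_tree_decomposition[of "card (fst S)"]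
    by (simp add: Suc_leI card_gt_0_iff)
  then show ?thesis
    unfolding kappaP_def by (rule LeastI2_ex[OF exI]) blast
qed

theorem mainTheorem14:
  fixes S :: "('a, 'r) struct" and ar :: "'r \<Rightarrow> nat"
  assumes "is_struct ar S" and "finite (fst S)" and "fst S \<noteq> {}"
  shows "tw S = int (kappaP S) - 1"
proof -
  obtain \<alpha> where "Pk_coalgebra (kappaP S) S \<alpha>"
    using ex_Pk_coalgebra_kappaP[OF assms] by blast
  then obtain T le bag where td: "tree_decomposition (fst S) (gaifman_adj S) T le bag"
    and "\<forall>x\<in>T. card (bag x) \<le> kappaP S"
    using tree_decomposition_of_Pk_coalgebra[OF assms(2)] by blast
  then have width: "decomp_width T bag = int (kappaP S) - 1"
    using decomp_width_le kappaP_le_decomp_width[OF assms] by (meson order.antisym)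
  show ?thesis
    unfolding tw_def treewidth_def
  proof (rule Least_equality)
    show "\<exists>T le bag. tree_decomposition (fst S) (gaifman_adj S) T le bag
        \<and> int (kappaP S) - 1 = decomp_width T bag"
      using td width by (intro exI[of _ T] exI[of _ le] exI[of _ bag]) simp
  qed (use kappaP_le_decomp_width[OF assms] in blast)
qed

end
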